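(* Suppose $f$ has equal algebraic and topological degrees $d=\lambda_2\ge 2$. Let $p\in\mathbb{P}^2$ be a point such that $f(p)$ is a regular value of $f$ with $\lambda_2$ distinct $f$-preimages, all outside $\mathcal{I}$. Let $L,L'$ be lines through $p$ that do not meet $\mathcal{I}$ and have distinct images $f(L)\neq f(L')$. Then at least one of the irreducible curves $f(L)$, $f(L')$ is not a line.
   Context: $f:\mathbb{P}^2\dashrightarrow\mathbb{P}^2$ is a dominant rational map with algebraic degree $d$, topological degree $\lambda_2$ (number of preimages of a generic point) and finite indeterminacy set $\mathcal{I}$. For a curve $V$, $f(V):=\overline{f(V\setminus\mathcal{I})}$. *)

theory Defs
  imports "HOL-Analysis.Analysis"
begin

text \<open>Points of P^2 are represented by nonzero vectors of C^3; subsets of P^2 by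
  cones of nonzero vectors (sets closed under nonzero scaling).\<close>

type_synonym vec3 = "complex \<times> complex \<times> complex"
type_synonym poly3 = "nat \<times> nat \<times> nat \<Rightarrow> complex"
type_synonym ratmap = "poly3 \<times> poly3 \<times> poly3"

fun smult3 :: "complex \<Rightarrow> vec3 \<Rightarrow> vec3" where
  "smult3 c (x, y, z) = (c * x, c * y, c * z)"

fun dot3 :: "vec3 \<Rightarrow> vec3 \<Rightarrow> complex" where
  "dot3 (a, b, e) (x, y, z) = a * x + b * y + e * z"

definition supp3 :: "poly3 \<Rightarrow> (nat \<times> nat \<times> nat) set" where
  "supp3 p = {m. p m \<noteq> 0}"

definition is_poly3 :: "poly3 \<Rightarrow> bool" where
  "is_poly3 p \<longleftrightarrow> finite (supp3 p)"

definition homog3 :: "nat \<Rightarrow> poly3 \<Rightarrow> bool" where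
  "homog3 d p \<longleftrightarrow> is_poly3 p \<and> (\<forall>i j k. p (i, j, k) \<noteq> 0 \<longrightarrow> i + j + k = d)"

fun peval :: "poly3 \<Rightarrow> vec3 \<Rightarrow> complex" where
  "peval p (x, y, z) = (\<Sum>(i, j, k) \<in> supp3 p. p (i, j, k) * x ^ i * y ^ j * z ^ k)"

fun pmul :: "poly3 \<Rightarrow> poly3 \<Rightarrow> poly3" where
  "pmul g q (a, b, c) =
     (\<Sum>i\<le>a. \<Sum>j\<le>b. \<Sum>k\<le>c. g (i, j, k) * q (a - i, b - j, c - k))"

fun pd0 :: "poly3 \<Rightarrow> vec3 \<Rightarrow> complex" where
  "pd0 p (x, y, z) = (\<Sum>(i, j, k) \<in> supp3 p. p (i, j, k) * of_nat i * x ^ (i - 1) * y ^ j * z ^ k)"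
fun pd1 :: "poly3 \<Rightarrow> vec3 \<Rightarrow> complex" where
  "pd1 p (x, y, z) = (\<Sum>(i, j, k) \<in> supp3 p. p (i, j, k) * of_nat j * x ^ i * y ^ (j - 1) * z ^ k)"
fun pd2 :: "poly3 \<Rightarrow> vec3 \<Rightarrow> complex" where
  "pd2 p (x, y, z) = (\<Sum>(i, j, k) \<in> supp3 p. p (i, j, k) * of_nat k * x ^ i * y ^ j * z ^ (k - 1))"

fun det3 :: "vec3 \<Rightarrow> vec3 \<Rightarrow> vec3 \<Rightarrow> complex" where
  "det3 (a, b, c) (d, e, f) (g, h, i) =
     a * (e * i - f * h) - b * (d * i - f * g) + c * (d * h - e * g)"

fun ratmap_deg :: "ratmap \<Rightarrow> nat \<Rightarrow> bool" where
  "ratmap_deg (F0, F1, F2) d \<longleftrightarrow>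
     homog3 d F0 \<and> homog3 d F1 \<and> homog3 d F2 \<and>
     \<not> (F0 = (\<lambda>_. 0) \<and> F1 = (\<lambda>_. 0) \<and> F2 = (\<lambda>_. 0)) \<and>
     \<not> (\<exists>g q0 q1 q2. is_poly3 g \<and> is_poly3 q0 \<and> is_poly3 q1 \<and> is_poly3 q2 \<and>
           (\<exists>m. m \<noteq> (0, 0, 0) \<and> g m \<noteq> 0) \<and>
           F0 = pmul g q0 \<and> F1 = pmul g q1 \<and> F2 = pmul g q2)"

fun Fmap :: "ratmap \<Rightarrow> vec3 \<Rightarrow> vec3" where
  "Fmap (F0, F1, F2) v = (peval F0 v, peval F1 v, peval F2 v)"

fun jacdet :: "ratmap \<Rightarrow> vec3 \<Rightarrow> complex" where
  "jacdet (F0, F1, F2) v =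
     det3 (pd0 F0 v, pd1 F0 v, pd2 F0 v) (pd0 F1 v, pd1 F1 v, pd2 F1 v)
          (pd0 F2 v, pd1 F2 v, pd2 F2 v)"

definition indet :: "ratmap \<Rightarrow> vec3 set" where
  "indet F = {v. v \<noteq> 0 \<and> Fmap F v = 0}"

definition proj_pt :: "vec3 \<Rightarrow> vec3 set" where
  "proj_pt v = {smult3 c v | c. c \<noteq> 0}"

definition preimages :: "ratmap \<Rightarrow> vec3 \<Rightarrow> vec3 set set" where
  "preimages F w = {proj_pt v | v. v \<noteq> 0 \<and> v \<notin> indet F \<and> Fmap F v \<in> proj_pt w}"

text \<open>Points of the total transform of the indeterminacy set: limits of f(x_n) with
  x_n tending to an indeterminacy point (classical topology of P^2).\<close>
definition indet_image :: "ratmap \<Rightarrow> vec3 set" where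
  "indet_image F = {w. w \<noteq> 0 \<and> (\<exists>x \<in> indet F. \<exists>vs cs.
      (\<forall>n. vs n \<noteq> 0 \<and> vs n \<notin> indet F) \<and> vs \<longlonglongrightarrow> x \<and>
      (\<lambda>n. smult3 (cs n) (Fmap F (vs n))) \<longlonglongrightarrow> w)}"

definition zclosure :: "vec3 set \<Rightarrow> vec3 set" where
  "zclosure S = {w. w \<noteq> 0 \<and> (\<forall>h d. homog3 d h \<longrightarrow> (\<forall>v\<in>S. peval h v = 0) \<longrightarrow> peval h w = 0)}"

definition image_set :: "ratmap \<Rightarrow> vec3 set \<Rightarrow> vec3 set" where
  "image_set F V = zclosure {smult3 c (Fmap F v) | c v. c \<noteq> 0 \<and> v \<in> V \<and> v \<notin> indet F}"

definition dominant :: "ratmap \<Rightarrow> bool" where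
  "dominant F \<longleftrightarrow> image_set F {v. v \<noteq> 0} = {v. v \<noteq> 0}"

text \<open>Topological degree n: a generic point (outside a proper algebraic curve) has
  exactly n preimages.\<close>
definition topdeg :: "ratmap \<Rightarrow> nat \<Rightarrow> bool" where
  "topdeg F n \<longleftrightarrow> (\<exists>h e. homog3 e h \<and> h \<noteq> (\<lambda>_. 0) \<and>
      (\<forall>w. w \<noteq> 0 \<and> peval h w \<noteq> 0 \<longrightarrow> finite (preimages F w) \<and> card (preimages F w) = n))"

text \<open>Regular value: f is a local biholomorphism at every preimage (outside I),
  i.e. the Jacobian determinant of the homogeneous lift does not vanish there.\<close>
definition regular_value :: "ratmap \<Rightarrow> vec3 \<Rightarrow> bool" where
  "regular_value F w \<longleftrightarrow> (\<forall>v. v \<noteq> 0 \<and> v \<notin> indet F \<and> Fmap F v \<in> proj_pt w \<longrightarrow> jacdet F v \<noteq> 0)"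

definition line :: "vec3 \<Rightarrow> vec3 set" where
  "line a = {v. v \<noteq> 0 \<and> dot3 a v = 0}"

definition is_line :: "vec3 set \<Rightarrow> bool" where
  "is_line S \<longleftrightarrow> (\<exists>a. a \<noteq> 0 \<and> S = line a)"

end

theory Submission
  imports Defs "HOL-Computational_Algebra.Fundamental_Theorem_Algebra"
begin

(* If f(L) is a line l, pick a second line l' through f(p) and restrict its equation to L:
   this gives a polynomial of degree d in the parameter of L whose roots are preimages of f(p).
   The roots are simple because f(p) is a regular value: at a double root v the derivative
   of f along L would lie on both l and l', hence be parallel to f(v), and Euler's identity
   would then make the Jacobian of f singular at v. So L contains d = lambda_2 distinct
   preimages, i.e. all of them. If f(L) and f(L') were both lines, L and L' would both contain
   all lambda_2 >= 2 preimages, in particular one besides p, forcing L = L'. *)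

section \<open>Polynomials in one variable\<close>

lemma coeff_mult_degree_le_sum:
  fixes p q :: "'a::comm_semiring_0 poly"
  assumes "degree p \<le> m" "degree q \<le> n"
  shows "coeff (p * q) (m + n) = coeff p m * coeff q n"
proof (cases "degree p = m \<and> degree q = n")
  case True
  then show ?thesis using coeff_mult_degree_sum by blast
next
  case False
  then have "coeff p m * coeff q n = 0"
    using assms by (auto simp: coeff_eq_0)
  moreover have "coeff (p * q) (m + n) = 0"
    using False assms degree_mult_le[of p q] by (intro coeff_eq_0) linarith
  ultimately show ?thesis by simp
qed

lemma degree_linear_power_le: "degree ([:a, b:] ^ n) \<le> n"
proof -
  have "degree ([:a, b:] ^ n) \<le> degree [:a, b:] * n" by (rule degree_power_le)
  also have "\<dots> \<le> n" by (cases "b = 0") auto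
  finally show ?thesis .
qed

lemma coeff_linear_power_degree: "coeff ([:a, b:] ^ n) n = (b::'a::comm_semiring_1) ^ n"
proof (induction n)
  case (Suc n)
  have "coeff ([:a, b:] ^ Suc n) (1 + n) = coeff [:a, b:] 1 * coeff ([:a, b:] ^ n) n"
    unfolding power_Suc by (rule coeff_mult_degree_le_sum) (simp_all add: degree_linear_power_le)
  then show ?case using Suc by simp
qed simp

lemma card_roots_rsquarefree:
  fixes p :: "complex poly"
  assumes "rsquarefree p"
  shows "card {x. poly p x = 0} = degree p"
proof -
  have "p \<noteq> 0" using assms by (simp add: rsquarefree_def)
  have "degree p = degree (smult (lead_coeff p) (\<Prod>z|poly p z = 0. [:-z, 1:]))"
    using complex_poly_decompose_rsquarefree[OF assms] by simp
  also have "\<dots> = (\<Sum>z|poly p z = 0. degree [:-z, 1:])"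
    using \<open>p \<noteq> 0\<close> by (simp add: degree_prod_eq_sum_degree)
  finally show ?thesis by simp
qed

section \<open>Linear algebra in \<open>\<complex>\<^sup>3\<close>\<close>

fun cross3 :: "vec3 \<Rightarrow> vec3 \<Rightarrow> vec3" where
  "cross3 (a0, a1, a2) (b0, b1, b2) = (a1 * b2 - a2 * b1, a2 * b0 - a0 * b2, a0 * b1 - a1 * b0)"

fun line_point :: "vec3 \<Rightarrow> vec3 \<Rightarrow> complex \<Rightarrow> vec3" where
  "line_point (q0, q1, q2) (u0, u1, u2) t = (q0 + t * u0, q1 + t * u1, q2 + t * u2)"

lemma vec3_eq_0_iff: "((x, y, z)::vec3) = 0 \<longleftrightarrow> x = 0 \<and> y = 0 \<and> z = 0"
  by (simp add: zero_prod_def)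

lemma smult3_1 [simp]: "smult3 1 v = v"
  by (cases v) auto

lemma smult3_smult3: "smult3 c (smult3 l v) = smult3 (c * l) v"
  by (cases v) auto

lemma smult3_eq_0_iff: "smult3 c v = 0 \<longleftrightarrow> c = 0 \<or> v = 0"
  by (cases v) (auto simp: vec3_eq_0_iff)

lemma dot3_smult3_left: "dot3 (smult3 c a) v = c * dot3 a v"
  by (cases a; cases v) (simp add: algebra_simps)

lemma dot3_smult3_right: "dot3 a (smult3 c v) = c * dot3 a v"
  by (cases a; cases v) (simp add: algebra_simps)

lemma dot3_line_point: "dot3 r (line_point (smult3 s v) w t) = s * dot3 r v + t * dot3 r w"
  by (cases r; cases v; cases w) (simp add: algebra_simps)

lemma dot3_cross3_self: "dot3 (cross3 x e) x = 0"
  by (cases x; cases e) (simp add: algebra_simps)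

lemma cross3_smult3_left: "cross3 (smult3 l x) e = smult3 l (cross3 x e)"
  by (cases x; cases e) (simp add: algebra_simps)

lemma cross3_line_point_right: "cross3 w (line_point p w t) = cross3 w p"
  by (cases p; cases w) (simp add: algebra_simps)

lemma det3_eq_0_if_kernel:
  assumes "dot3 r1 k = 0" "dot3 r2 k = 0" "dot3 r3 k = 0" "k \<noteq> 0"
  shows "det3 r1 r2 r3 = 0"
proof -
  obtain a b c where r1: "r1 = (a, b, c)" by (cases r1) auto
  obtain d e f where r2: "r2 = (d, e, f)" by (cases r2) auto
  obtain g h i where r3: "r3 = (g, h, i)" by (cases r3) auto
  obtain x y z where k: "k = (x, y, z)" by (cases k) auto
  have "a * x + b * y + c * z = 0" "d * x + e * y + f * z = 0" "g * x + h * y + i * z = 0"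
    using assms by (simp_all add: r1 r2 r3 k)
  then have "det3 r1 r2 r3 * x = 0" "det3 r1 r2 r3 * y = 0" "det3 r1 r2 r3 * z = 0"
    unfolding r1 r2 r3 det3.simps by algebra+
  moreover have "x \<noteq> 0 \<or> y \<noteq> 0 \<or> z \<noteq> 0" using assms(4) by (simp add: k vec3_eq_0_iff)
  ultimately show ?thesis by auto
qed

lemma parallel_if_cross3_eq_0:
  assumes "cross3 y x = 0" "x \<noteq> 0"
  obtains l where "y = smult3 l x"
proof -
  obtain a b c where x: "x = (a, b, c)" by (cases x) auto
  obtain d e f where y: "y = (d, e, f)" by (cases y) auto
  have e: "e * c - f * b = 0" "f * a - d * c = 0" "d * b - e * a = 0"
    using assms(1) by (simp_all add: x y vec3_eq_0_iff)
  have "a \<noteq> 0 \<or> b \<noteq> 0 \<or> c \<noteq> 0" using assms(2) by (simp add: x vec3_eq_0_iff)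
  then have "\<exists>l. y = smult3 l x"
  proof (elim disjE)
    assume "a \<noteq> 0" then show ?thesis using e by (intro exI[of _ "d / a"]) (auto simp: x y field_simps)
  next
    assume "b \<noteq> 0" then show ?thesis using e by (intro exI[of _ "e / b"]) (auto simp: x y field_simps)
  next
    assume "c \<noteq> 0" then show ?thesis using e by (intro exI[of _ "f / c"]) (auto simp: x y field_simps)
  qed
  then show ?thesis using that by blast
qed

text \<open>The lines \<open>b\<close> and \<open>x \<times> e\<close> both pass through \<open>x\<close>, and they are distinct
  because \<open>e \<bullet> b \<noteq> 0\<close> while \<open>e \<bullet> (x \<times> e) = 0\<close>; so \<open>x\<close> is their only common point.\<close>
lemma cross3_eq_0_if_on_two_lines:
  assumes "dot3 b y = 0" "dot3 b x = 0" "dot3 e b \<noteq> 0" "dot3 (cross3 x e) y = 0"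
  shows "cross3 y x = 0"
proof -
  have "b \<noteq> 0" using assms(3) by (cases e) (auto simp: zero_prod_def)
  have "cross3 (cross3 y x) b = 0"
  proof -
    obtain b0 b1 b2 where b: "b = (b0, b1, b2)" by (cases b) auto
    obtain x0 x1 x2 where x: "x = (x0, x1, x2)" by (cases x) auto
    obtain y0 y1 y2 where y: "y = (y0, y1, y2)" by (cases y) auto
    have "b0 * y0 + b1 * y1 + b2 * y2 = 0" "b0 * x0 + b1 * x1 + b2 * x2 = 0"
      using assms(1,2) by (simp_all add: b x y)
    then show ?thesis unfolding b x y cross3.simps vec3_eq_0_iff by algebra
  qed
  then obtain l where l: "cross3 y x = smult3 l b" using parallel_if_cross3_eq_0 \<open>b \<noteq> 0\<close> by blast
  have "dot3 e (cross3 y x) = 0" using assms(4)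
    by (cases e; cases x; cases y) (auto simp: algebra_simps)
  then have "l = 0" using assms(3) by (simp add: l dot3_smult3_right)
  then show ?thesis using l by (cases b) (simp add: vec3_eq_0_iff)
qed

lemma line_point_smult3_eq_0D:
  assumes "cross3 w p \<noteq> 0" "line_point (smult3 s p) w t = 0"
  shows "s = 0 \<and> t = 0"
proof -
  obtain a b c where p: "p = (a, b, c)" by (cases p) auto
  obtain d e f where w: "w = (d, e, f)" by (cases w) auto
  have h: "s * a + t * d = 0" "s * b + t * e = 0" "s * c + t * f = 0"
    using assms(2) by (simp_all add: p w vec3_eq_0_iff)
  have nz: "e * c - f * b \<noteq> 0 \<or> f * a - d * c \<noteq> 0 \<or> d * b - e * a \<noteq> 0"
    using assms(1) by (simp add: p w vec3_eq_0_iff)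
  have "t * (e * c - f * b) = 0" "t * (f * a - d * c) = 0" "t * (d * b - e * a) = 0"
    "s * (e * c - f * b) = 0" "s * (f * a - d * c) = 0" "s * (d * b - e * a) = 0"
    using h by algebra+
  then show ?thesis using nz by auto
qed

lemma exists_dot3_ne_0:
  assumes "b \<noteq> 0"
  obtains e where "dot3 e b \<noteq> 0"
proof -
  obtain b0 b1 b2 where b: "b = (b0, b1, b2)" by (cases b) auto
  then have "b0 \<noteq> 0 \<or> b1 \<noteq> 0 \<or> b2 \<noteq> 0" using assms by (simp add: vec3_eq_0_iff)
  then show ?thesis
    using that[of "(1, 0, 0)"] that[of "(0, 1, 0)"] that[of "(0, 0, 1)"] by (auto simp: b)
qed

lemma line_point_in_line:
  assumes "p \<in> line a" "dot3 a w = 0" "cross3 w p \<noteq> 0"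
  shows "line_point p w t \<in> line a"
  using assms line_point_smult3_eq_0D[OF assms(3), of 1 t] dot3_line_point[of a 1 p w t]
  by (auto simp: line_def)

lemma exists_second_point_on_line:
  assumes "p \<in> line a" "a \<noteq> 0"
  obtains w where "dot3 a w = 0" "cross3 w p \<noteq> 0"
proof -
  have "p \<noteq> 0" "dot3 a p = 0" using assms(1) by (simp_all add: line_def)
  then obtain e where e: "dot3 e p \<noteq> 0" using exists_dot3_ne_0 by blast
  have "cross3 (cross3 e a) p = smult3 (dot3 e p) a"
  proof -
    obtain a0 a1 a2 where a: "a = (a0, a1, a2)" by (cases a) auto
    obtain p0 p1 p2 where p: "p = (p0, p1, p2)" by (cases p) auto
    obtain e0 e1 e2 where e: "e = (e0, e1, e2)" by (cases e) auto
    have "a0 * p0 + a1 * p1 + a2 * p2 = 0" using \<open>dot3 a p = 0\<close> by (simp add: a p)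
    then show ?thesis unfolding a p e cross3.simps smult3.simps dot3.simps prod.inject by algebra
  qed
  then have "cross3 (cross3 e a) p \<noteq> 0" using e assms(2) by (simp add: smult3_eq_0_iff)
  moreover have "dot3 a (cross3 e a) = 0" by (cases a; cases e) (simp add: algebra_simps)
  ultimately show ?thesis using that by blast
qed

lemma line_eq_if_two_points:
  assumes "p \<in> line a" "q \<in> line a" "p \<in> line a'" "q \<in> line a'" "cross3 q p \<noteq> 0"
    and "a \<noteq> 0" "a' \<noteq> 0"
  shows "line a = line a'"
proof -
  have multiple: "\<exists>l. l \<noteq> 0 \<and> a = smult3 l (cross3 q p)"
    if "p \<in> line a" "q \<in> line a" "a \<noteq> 0" for a
  proof -
    obtain a0 a1 a2 where a: "a = (a0, a1, a2)" by (cases a) auto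
    obtain p0 p1 p2 where p: "p = (p0, p1, p2)" by (cases p) auto
    obtain q0 q1 q2 where q: "q = (q0, q1, q2)" by (cases q) auto
    have "a0 * p0 + a1 * p1 + a2 * p2 = 0" "a0 * q0 + a1 * q1 + a2 * q2 = 0"
      using that by (simp_all add: a p q line_def)
    then have "cross3 a (cross3 q p) = 0" unfolding a p q cross3.simps vec3_eq_0_iff by algebra
    then obtain l where "a = smult3 l (cross3 q p)" using parallel_if_cross3_eq_0 assms(5) by blast
    then show ?thesis using \<open>a \<noteq> 0\<close> by (auto simp: smult3_eq_0_iff)
  qed
  obtain l where "l \<noteq> 0" "a = smult3 l (cross3 q p)" using multiple assms(1,2,6) by blast
  moreover obtain l' where "l' \<noteq> 0" "a' = smult3 l' (cross3 q p)" using multiple assms(3,4,7) by blast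
  ultimately show ?thesis by (auto simp: line_def dot3_smult3_left)
qed

lemma smult3_in_line_iff: "c \<noteq> 0 \<Longrightarrow> smult3 c v \<in> line a \<longleftrightarrow> v \<in> line a"
  by (auto simp: line_def dot3_smult3_right smult3_eq_0_iff)

lemma mem_proj_pt: "v \<in> proj_pt v"
  unfolding proj_pt_def by (intro CollectI exI[of _ 1]) simp

lemma proj_pt_eqD:
  assumes "proj_pt v = proj_pt u"
  obtains c where "c \<noteq> 0" "v = smult3 c u"
  using mem_proj_pt[of v] assms that by (auto simp: proj_pt_def)

lemma in_line_if_proj_pt_eq: "proj_pt v = proj_pt u \<Longrightarrow> u \<in> line a \<Longrightarrow> v \<in> line a"
  by (metis proj_pt_eqD smult3_in_line_iff)

lemma proj_pt_smult3:
  assumes "l \<noteq> 0"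
  shows "proj_pt (smult3 l v) = proj_pt v"
proof (intro set_eqI iffI)
  fix y assume "y \<in> proj_pt (smult3 l v)"
  then obtain c where "c \<noteq> 0" "y = smult3 (c * l) v" by (auto simp: proj_pt_def smult3_smult3)
  with assms show "y \<in> proj_pt v" by (auto simp: proj_pt_def)
next
  fix y assume "y \<in> proj_pt v"
  then obtain c where "c \<noteq> 0" "y = smult3 (c / l) (smult3 l v)"
    using assms by (auto simp: proj_pt_def smult3_smult3)
  with assms show "y \<in> proj_pt (smult3 l v)" by (auto simp: proj_pt_def)
qed

lemma proj_pt_eq_if_cross3_eq_0:
  assumes "cross3 v p = 0" "p \<noteq> 0" "v \<noteq> 0"
  shows "proj_pt v = proj_pt p"
proof -
  obtain l where l: "v = smult3 l p" using parallel_if_cross3_eq_0 assms(1,2) by blast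
  with assms(3) have "l \<noteq> 0" by (auto simp: smult3_eq_0_iff)
  then show ?thesis by (simp add: l proj_pt_smult3)
qed

lemma inj_proj_pt_line_point:
  assumes "cross3 w p \<noteq> 0"
  shows "inj (\<lambda>t. proj_pt (line_point p w t))"
proof (rule injI)
  fix t t' assume "proj_pt (line_point p w t) = proj_pt (line_point p w t')"
  then obtain c where "line_point p w t = smult3 c (line_point p w t')" by (rule proj_pt_eqD)
  then have "line_point (smult3 (1 - c) p) w (t - c * t') = 0"
    by (cases p; cases w) (auto simp: vec3_eq_0_iff algebra_simps)
  from line_point_smult3_eq_0D[OF assms this] show "t = t'" by simp
qed

section \<open>Homogeneous polynomials along a line\<close>

lemma homog3_supp3: "homog3 d h \<Longrightarrow> (i, j, k) \<in> supp3 h \<Longrightarrow> i + j + k = d"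
  by (auto simp: homog3_def supp3_def)

lemma peval_smult3:
  assumes "homog3 d h"
  shows "peval h (smult3 c v) = c ^ d * peval h v"
proof -
  obtain x y z where v: "v = (x, y, z)" by (cases v) auto
  have "peval h (smult3 c v) =
      (\<Sum>m\<in>supp3 h. c ^ d * (case m of (i, j, k) \<Rightarrow> h (i, j, k) * x ^ i * y ^ j * z ^ k))"
    unfolding v smult3.simps peval.simps
  proof (rule sum.cong[OF refl], clarify)
    fix i j k assume "(i, j, k) \<in> supp3 h"
    then have "c ^ d = c ^ i * c ^ j * c ^ k"
      using homog3_supp3[OF assms] by (simp add: power_add[symmetric])
    then show "h (i, j, k) * (c * x) ^ i * (c * y) ^ j * (c * z) ^ k =
        c ^ d * (h (i, j, k) * x ^ i * y ^ j * z ^ k)"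
      by (simp add: power_mult_distrib)
  qed
  then show ?thesis by (simp add: v sum_distrib_left)
qed

definition grad3 :: "poly3 \<Rightarrow> vec3 \<Rightarrow> vec3" where
  "grad3 h v = (pd0 h v, pd1 h v, pd2 h v)"

lemma euler_homog3:
  assumes "homog3 d h"
  shows "dot3 (grad3 h v) v = of_nat d * peval h v"
proof -
  obtain x y z where v: "v = (x, y, z)" by (cases v) auto
  have monomial: "h (i, j, k) * of_nat i * x ^ (i - 1) * y ^ j * z ^ k * x
      + h (i, j, k) * of_nat j * x ^ i * y ^ (j - 1) * z ^ k * y
      + h (i, j, k) * of_nat k * x ^ i * y ^ j * z ^ (k - 1) * z
      = of_nat d * (h (i, j, k) * x ^ i * y ^ j * z ^ k)"
    if "(i, j, k) \<in> supp3 h" for i j k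
  proof -
    have "of_nat d = (of_nat i + of_nat j + of_nat k :: complex)"
      using homog3_supp3[OF assms that] by (metis of_nat_add)
    then show ?thesis by (cases i; cases j; cases k) (simp_all add: algebra_simps)
  qed
  have "dot3 (grad3 h v) v = (\<Sum>m\<in>supp3 h. case m of (i, j, k) \<Rightarrow>
      h (i, j, k) * of_nat i * x ^ (i - 1) * y ^ j * z ^ k * x
      + h (i, j, k) * of_nat j * x ^ i * y ^ (j - 1) * z ^ k * y
      + h (i, j, k) * of_nat k * x ^ i * y ^ j * z ^ (k - 1) * z)"
    by (simp add: v grad3_def sum_distrib_right sum.distrib split_def)
  also have "\<dots> = (\<Sum>m\<in>supp3 h. of_nat d * (case m of (i, j, k) \<Rightarrow> h (i, j, k) * x ^ i * y ^ j * z ^ k))"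
    using monomial by (intro sum.cong) auto
  finally show ?thesis by (simp add: v sum_distrib_left)
qed

lemma peval_line_point_deriv:
  "((\<lambda>t. peval h (line_point q u t)) has_field_derivative
    dot3 (grad3 h (line_point q u t)) u) (at t)"
proof -
  obtain q0 q1 q2 where q: "q = (q0, q1, q2)" by (cases q) auto
  obtain u0 u1 u2 where u: "u = (u0, u1, u2)" by (cases u) auto
  have "((\<lambda>t. \<Sum>m\<in>supp3 h. case m of (i, j, k) \<Rightarrow>
        h (i, j, k) * (q0 + t * u0) ^ i * (q1 + t * u1) ^ j * (q2 + t * u2) ^ k)
    has_field_derivative (\<Sum>m\<in>supp3 h. case m of (i, j, k) \<Rightarrow>
        h (i, j, k) * of_nat i * (q0 + t * u0) ^ (i - 1) * (q1 + t * u1) ^ j * (q2 + t * u2) ^ k * u0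
      + h (i, j, k) * of_nat j * (q0 + t * u0) ^ i * (q1 + t * u1) ^ (j - 1) * (q2 + t * u2) ^ k * u1
      + h (i, j, k) * of_nat k * (q0 + t * u0) ^ i * (q1 + t * u1) ^ j * (q2 + t * u2) ^ (k - 1) * u2))
    (at t)"
    by (rule DERIV_sum, clarsimp split: prod.splits,
        (rule derivative_eq_intros refl | simp)+, simp add: algebra_simps)
  then show ?thesis
    by (simp add: q u grad3_def sum_distrib_right sum.distrib split_def)
qed

fun line_poly :: "poly3 \<Rightarrow> vec3 \<Rightarrow> vec3 \<Rightarrow> complex poly" where
  "line_poly h (q0, q1, q2) (u0, u1, u2) =
     (\<Sum>(i, j, k)\<in>supp3 h. smult (h (i, j, k)) ([:q0, u0:] ^ i * [:q1, u1:] ^ j * [:q2, u2:] ^ k))"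

lemma poly_line_poly: "poly (line_poly h q u) t = peval h (line_point q u t)"
  by (cases q; cases u) (simp add: poly_sum split_def algebra_simps)

lemma line_poly_degree_coeff:
  assumes "homog3 d h"
  shows "degree (line_poly h q u) \<le> d \<and> coeff (line_poly h q u) d = peval h u"
proof -
  obtain q0 q1 q2 where q: "q = (q0, q1, q2)" by (cases q) auto
  obtain u0 u1 u2 where u: "u = (u0, u1, u2)" by (cases u) auto
  have fin: "finite (supp3 h)" using assms by (simp add: homog3_def is_poly3_def)
  have monomial: "degree ([:q0, u0:] ^ i * [:q1, u1:] ^ j * [:q2, u2:] ^ k) \<le> i + j + k \<and>
     coeff ([:q0, u0:] ^ i * [:q1, u1:] ^ j * [:q2, u2:] ^ k) (i + j + k) = u0 ^ i * u1 ^ j * u2 ^ k"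
    for i j k
  proof -
    have "degree ([:q0, u0:] ^ i * [:q1, u1:] ^ j) \<le> i + j"
      using degree_mult_le[of "[:q0, u0:] ^ i" "[:q1, u1:] ^ j"] degree_linear_power_le[of q0 u0 i]
        degree_linear_power_le[of q1 u1 j] by linarith
    moreover from this have "degree ([:q0, u0:] ^ i * [:q1, u1:] ^ j * [:q2, u2:] ^ k) \<le> i + j + k"
      using degree_mult_le[of "[:q0, u0:] ^ i * [:q1, u1:] ^ j" "[:q2, u2:] ^ k"]
        degree_linear_power_le[of q2 u2 k] by linarith
    ultimately show ?thesis
      by (simp add: coeff_mult_degree_le_sum degree_linear_power_le coeff_linear_power_degree)
  qed
  have "degree (line_poly h q u) \<le> d"
    unfolding q u line_poly.simps
  proof (rule degree_sum_le[OF fin], clarify)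
    fix i j k assume "(i, j, k) \<in> supp3 h"
    then show "degree (smult (h (i, j, k)) ([:q0, u0:] ^ i * [:q1, u1:] ^ j * [:q2, u2:] ^ k)) \<le> d"
      using homog3_supp3[OF assms] monomial[of i j k] degree_smult_le order_trans by blast
  qed
  moreover have "coeff (line_poly h q u) d = peval h u"
    unfolding q u line_poly.simps peval.simps coeff_sum
  proof (rule sum.cong[OF refl], clarify)
    fix i j k assume "(i, j, k) \<in> supp3 h"
    then have "d = i + j + k" using homog3_supp3[OF assms] by simp
    then show "coeff (smult (h (i, j, k)) ([:q0, u0:] ^ i * [:q1, u1:] ^ j * [:q2, u2:] ^ k)) d =
        h (i, j, k) * u0 ^ i * u1 ^ j * u2 ^ k"
      using monomial[of i j k] by simp
  qed
  ultimately show ?thesis by simp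
qed

section \<open>The map restricted to a line\<close>

fun Fmap_deriv :: "ratmap \<Rightarrow> vec3 \<Rightarrow> vec3 \<Rightarrow> vec3" where
  "Fmap_deriv (F0, F1, F2) v u = (dot3 (grad3 F0 v) u, dot3 (grad3 F1 v) u, dot3 (grad3 F2 v) u)"

lemma Fmap_smult3: "ratmap_deg F d \<Longrightarrow> Fmap F (smult3 l v) = smult3 (l ^ d) (Fmap F v)"
  by (cases F) (simp add: peval_smult3)

lemma Fmap_in_image_set:
  assumes "v \<in> V" "v \<notin> indet F" "Fmap F v \<noteq> 0"
  shows "Fmap F v \<in> image_set F V"
proof -
  have "Fmap F v \<in> {smult3 c (Fmap F v) | c v. c \<noteq> 0 \<and> v \<in> V \<and> v \<notin> indet F}"
    using assms(1,2) by (intro CollectI exI[of _ 1] exI[of _ v]) simp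
  with assms(3) show ?thesis unfolding image_set_def zclosure_def by blast
qed

text \<open>By Euler's identity the Jacobian matrix sends \<open>v\<close> to \<open>d F(v)\<close>; if it also sends
  \<open>w\<close> to \<open>\<mu> F(v)\<close>, it annihilates \<open>\<mu> v - d w \<noteq> 0\<close>.\<close>
lemma jacdet_eq_0_if_deriv_parallel:
  assumes F: "ratmap_deg F d" and "1 \<le> d" and "cross3 w v \<noteq> 0"
    and "Fmap F v \<noteq> 0" and "cross3 (Fmap_deriv F v w) (Fmap F v) = 0"
  shows "jacdet F v = 0"
proof -
  obtain F0 F1 F2 where FF: "F = (F0, F1, F2)" by (cases F) auto
  have hF: "homog3 d F0" "homog3 d F1" "homog3 d F2" using F by (simp_all add: FF)
  obtain mu where mu: "Fmap_deriv F v w = smult3 mu (Fmap F v)"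
    using parallel_if_cross3_eq_0 assms(4,5) by blast
  define k where "k = line_point (smult3 mu v) w (- of_nat d)"
  have "k \<noteq> 0"
    using line_point_smult3_eq_0D[OF assms(3)] \<open>1 \<le> d\<close> unfolding k_def by fastforce
  moreover have "dot3 (grad3 F0 v) k = 0" "dot3 (grad3 F1 v) k = 0" "dot3 (grad3 F2 v) k = 0"
    using mu euler_homog3[OF hF(1)] euler_homog3[OF hF(2)] euler_homog3[OF hF(3)]
    by (simp_all add: k_def dot3_line_point FF algebra_simps)
  ultimately have "det3 (grad3 F0 v) (grad3 F1 v) (grad3 F2 v) = 0"
    using det3_eq_0_if_kernel by blast
  then show ?thesis by (simp add: FF grad3_def)
qed

fun restrict_poly :: "ratmap \<Rightarrow> vec3 \<Rightarrow> vec3 \<Rightarrow> vec3 \<Rightarrow> complex poly" where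
  "restrict_poly (F0, F1, F2) (c0, c1, c2) p w =
     smult c0 (line_poly F0 p w) + smult c1 (line_poly F1 p w) + smult c2 (line_poly F2 p w)"

lemma poly_restrict_poly: "poly (restrict_poly F c p w) t = dot3 c (Fmap F (line_point p w t))"
  by (cases F; cases c) (simp add: poly_line_poly del: line_point.simps)

lemma restrict_poly_degree_coeff:
  assumes F: "ratmap_deg F d"
  shows "degree (restrict_poly F c p w) \<le> d \<and> coeff (restrict_poly F c p w) d = dot3 c (Fmap F w)"
proof -
  obtain F0 F1 F2 where FF: "F = (F0, F1, F2)" by (cases F) auto
  obtain c0 c1 c2 where cc: "c = (c0, c1, c2)" by (cases c) auto
  have hF: "homog3 d F0" "homog3 d F1" "homog3 d F2" using F by (simp_all add: FF)
  note deg_coeff = line_poly_degree_coeff[OF hF(1), of p w] line_poly_degree_coeff[OF hF(2), of p w]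
    line_poly_degree_coeff[OF hF(3), of p w]
  have "degree (restrict_poly F c p w) \<le> d"
    unfolding FF cc restrict_poly.simps using deg_coeff
    by (intro degree_add_le degree_smult_le[THEN order_trans]) auto
  moreover have "coeff (restrict_poly F c p w) d = dot3 c (Fmap F w)"
    using deg_coeff by (simp add: FF cc del: line_poly.simps)
  ultimately show ?thesis ..
qed

lemma poly_pderiv_restrict_poly:
  "poly (pderiv (restrict_poly F c p w)) t = dot3 c (Fmap_deriv F (line_point p w t) w)"
proof -
  obtain F0 F1 F2 where FF: "F = (F0, F1, F2)" by (cases F) auto
  obtain c0 c1 c2 where cc: "c = (c0, c1, c2)" by (cases c) auto
  have "((\<lambda>t. c0 * peval F0 (line_point p w t) + c1 * peval F1 (line_point p w t)
        + c2 * peval F2 (line_point p w t)) has_field_derivative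
      c0 * dot3 (grad3 F0 (line_point p w t)) w + c1 * dot3 (grad3 F1 (line_point p w t)) w
        + c2 * dot3 (grad3 F2 (line_point p w t)) w) (at t)"
    by (intro DERIV_add DERIV_cmult peval_line_point_deriv)
  then have "((\<lambda>t. poly (restrict_poly F c p w) t) has_field_derivative
      dot3 c (Fmap_deriv F (line_point p w t) w)) (at t)"
    unfolding poly_restrict_poly by (simp add: FF cc del: line_point.simps)
  then show ?thesis using DERIV_unique poly_DERIV by blast
qed

section \<open>Lines whose image is a line\<close>

lemma Fmap_ne_0_on_line: "line a \<inter> indet F = {} \<Longrightarrow> v \<in> line a \<Longrightarrow> Fmap F v \<noteq> 0"
  by (auto simp: line_def indet_def)

lemma dot3_Fmap_eq_0_if_image_line:
  assumes "image_set F (line a) = line b" "line a \<inter> indet F = {}" "v \<in> line a"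
  shows "dot3 b (Fmap F v) = 0"
proof -
  have "Fmap F v \<in> image_set F (line a)"
    using assms(2,3) by (intro Fmap_in_image_set Fmap_ne_0_on_line) auto
  with assms(1) show ?thesis by (simp add: line_def)
qed

lemma Fmap_in_proj_pt_if_on_pencil:
  assumes img: "image_set F (line a) = line b" and disj: "line a \<inter> indet F = {}"
    and "p \<in> line a" "v \<in> line a" and "dot3 e b \<noteq> 0"
    and "dot3 (cross3 (Fmap F p) e) (Fmap F v) = 0"
  shows "Fmap F v \<in> proj_pt (Fmap F p)"
proof -
  have "cross3 (Fmap F v) (Fmap F p) = 0"
    using assms(5,6) dot3_Fmap_eq_0_if_image_line[OF img disj] assms(3,4)
    by (intro cross3_eq_0_if_on_two_lines) auto
  then obtain l where l: "Fmap F v = smult3 l (Fmap F p)"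
    using parallel_if_cross3_eq_0 Fmap_ne_0_on_line[OF disj assms(3)] by blast
  then have "l \<noteq> 0" using Fmap_ne_0_on_line[OF disj assms(4)] by (auto simp: smult3_eq_0_iff)
  with l show ?thesis by (auto simp: proj_pt_def)
qed

lemma proj_pt_in_preimages:
  "v \<noteq> 0 \<Longrightarrow> v \<notin> indet F \<Longrightarrow> Fmap F v \<in> proj_pt x \<Longrightarrow> proj_pt v \<in> preimages F x"
  unfolding preimages_def by blast

lemma preimage_if_on_pencil:
  assumes "image_set F (line a) = line b" "line a \<inter> indet F = {}"
    and "p \<in> line a" "v \<in> line a" "dot3 e b \<noteq> 0"
    and "dot3 (cross3 (Fmap F p) e) (Fmap F v) = 0"
  shows "proj_pt v \<in> preimages F (Fmap F p)"
proof (rule proj_pt_in_preimages)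
  show "v \<noteq> 0" "v \<notin> indet F" using assms(2,4) by (auto simp: line_def)
qed (rule Fmap_in_proj_pt_if_on_pencil[OF assms])

text \<open>If \<open>c \<bullet> f\<close> vanished on all of \<open>L\<close>, every point of \<open>L\<close> would be a preimage of \<open>f(p)\<close>.\<close>
lemma exists_point_off_pencil:
  assumes F: "ratmap_deg F d" and "a \<noteq> 0" "p \<in> line a"
    and img: "image_set F (line a) = line b" and disj: "line a \<inter> indet F = {}"
    and "dot3 e b \<noteq> 0" and fin: "finite (preimages F (Fmap F p))"
  obtains w where "dot3 a w = 0" "cross3 w p \<noteq> 0" "dot3 (cross3 (Fmap F p) e) (Fmap F w) \<noteq> 0"
proof -
  let ?c = "cross3 (Fmap F p) e"
  obtain w0 where w0: "dot3 a w0 = 0" "cross3 w0 p \<noteq> 0"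
    using exists_second_point_on_line assms(2,3) by blast
  have "\<exists>w \<in> line a. dot3 ?c (Fmap F w) \<noteq> 0"
  proof (rule ccontr)
    assume "\<not> ?thesis"
    then have "range (\<lambda>t. proj_pt (line_point p w0 t)) \<subseteq> preimages F (Fmap F p)"
      using preimage_if_on_pencil[OF img disj \<open>p \<in> line a\<close> _ assms(6)]
        line_point_in_line[OF \<open>p \<in> line a\<close> w0] by blast
    then show False
      using fin inj_proj_pt_line_point[OF w0(2)] infinite_UNIV_char_0
      by (metis finite_imageD finite_subset)
  qed
  then obtain w where w: "w \<in> line a" "dot3 ?c (Fmap F w) \<noteq> 0" by blast
  have "cross3 w p \<noteq> 0"
  proof
    assume "cross3 w p = 0"
    moreover have "p \<noteq> 0" using assms(3) by (simp add: line_def)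
    ultimately obtain l where "w = smult3 l p" by (rule parallel_if_cross3_eq_0)
    then have "dot3 ?c (Fmap F w) = 0"
      by (simp add: Fmap_smult3[OF F] dot3_smult3_right dot3_cross3_self)
    with w(2) show False by simp
  qed
  moreover have "dot3 a w = 0" using w(1) by (simp add: line_def)
  ultimately show ?thesis using w(2) that by blast
qed

text \<open>A double root \<open>t\<close> means that the derivative of \<open>f\<close> along \<open>L\<close> at \<open>v = p + t w\<close> lies in
  both lines \<open>b\<close> and \<open>c\<close>, hence is parallel to \<open>f(v)\<close>; then \<open>f\<close> is not a local
  biholomorphism at the preimage \<open>v\<close> of \<open>f(p)\<close>.\<close>
lemma restrict_poly_rsquarefree:
  assumes F: "ratmap_deg F d" and "1 \<le> d"
    and img: "image_set F (line a) = line b" and disj: "line a \<inter> indet F = {}"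
    and pL: "p \<in> line a" and w: "dot3 a w = 0" "cross3 w p \<noteq> 0" and eb: "dot3 e b \<noteq> 0"
    and reg: "regular_value F (Fmap F p)"
  shows "rsquarefree (restrict_poly F (cross3 (Fmap F p) e) p w)"
  unfolding rsquarefree_roots
proof (intro allI notI)
  let ?c = "cross3 (Fmap F p) e"
  fix t assume root: "poly (restrict_poly F ?c p w) t = 0 \<and> poly (pderiv (restrict_poly F ?c p w)) t = 0"
  define v where "v = line_point p w t"
  have c_Fv: "dot3 ?c (Fmap F v) = 0" and c_dF: "dot3 ?c (Fmap_deriv F v w) = 0"
    using root by (simp_all add: v_def poly_restrict_poly poly_pderiv_restrict_poly)
  have vL: "v \<in> line a" unfolding v_def using line_point_in_line[OF pL w] .
  have "Fmap F v \<in> proj_pt (Fmap F p)"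
    using Fmap_in_proj_pt_if_on_pencil[OF img disj pL vL eb c_Fv] .
  then obtain l where l: "Fmap F v = smult3 l (Fmap F p)" by (auto simp: proj_pt_def)
  have "restrict_poly F b p w = 0"
    using dot3_Fmap_eq_0_if_image_line[OF img disj] line_point_in_line[OF pL w]
    by (simp add: poly_restrict_poly flip: poly_all_0_iff_0)
  then have "dot3 b (Fmap_deriv F v w) = 0"
    using poly_pderiv_restrict_poly[of F b p w t] by (simp add: v_def)
  moreover have "dot3 (cross3 (Fmap F v) e) (Fmap_deriv F v w) = 0"
    using c_dF by (simp add: l cross3_smult3_left dot3_smult3_left)
  ultimately have "cross3 (Fmap_deriv F v w) (Fmap F v) = 0"
    using dot3_Fmap_eq_0_if_image_line[OF img disj vL] eb by (intro cross3_eq_0_if_on_two_lines)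
  moreover have "cross3 w v \<noteq> 0" using w(2) by (simp add: v_def cross3_line_point_right)
  ultimately have "jacdet F v = 0"
    using jacdet_eq_0_if_deriv_parallel[OF F \<open>1 \<le> d\<close>] Fmap_ne_0_on_line[OF disj vL] by blast
  moreover have "jacdet F v \<noteq> 0"
    using reg vL disj \<open>Fmap F v \<in> proj_pt (Fmap F p)\<close> unfolding regular_value_def line_def by blast
  ultimately show False by simp
qed

lemma preimages_on_line:
  assumes F: "ratmap_deg F d" and "1 \<le> d" and "a \<noteq> 0" and pL: "p \<in> line a"
    and img: "image_set F (line a) = line b" "b \<noteq> 0" and disj: "line a \<inter> indet F = {}"
    and reg: "regular_value F (Fmap F p)" and fin: "finite (preimages F (Fmap F p))"
    and card: "card (preimages F (Fmap F p)) = d"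
    and v: "v \<noteq> 0" "v \<notin> indet F" "Fmap F v \<in> proj_pt (Fmap F p)"
  shows "v \<in> line a"
proof -
  obtain e where eb: "dot3 e b \<noteq> 0" using exists_dot3_ne_0[OF img(2)] .
  let ?c = "cross3 (Fmap F p) e"
  obtain w where w: "dot3 a w = 0" "cross3 w p \<noteq> 0" and cw: "dot3 ?c (Fmap F w) \<noteq> 0"
    using exists_point_off_pencil[OF F \<open>a \<noteq> 0\<close> pL img(1) disj eb fin] .
  define G where "G = restrict_poly F ?c p w"
  define T where "T = {t. poly G t = 0}"
  define \<phi> where "\<phi> t = proj_pt (line_point p w t)" for t
  have "degree G = d"
    using restrict_poly_degree_coeff[OF F, of ?c p w] cw le_degree[of G d] by (simp add: G_def)
  moreover have "rsquarefree G"
    unfolding G_def using restrict_poly_rsquarefree[OF F \<open>1 \<le> d\<close> img(1) disj pL w eb reg] .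
  ultimately have "card T = d" by (simp add: T_def card_roots_rsquarefree)
  moreover have "inj_on \<phi> T"
    using inj_proj_pt_line_point[OF w(2)] by (simp add: \<phi>_def inj_on_def)
  ultimately have "card (\<phi> ` T) = card (preimages F (Fmap F p))"
    by (simp add: card card_image)
  moreover have "\<phi> ` T \<subseteq> preimages F (Fmap F p)"
    using preimage_if_on_pencil[OF img(1) disj pL line_point_in_line[OF pL w] eb]
    by (auto simp: \<phi>_def T_def G_def poly_restrict_poly)
  ultimately have "\<phi> ` T = preimages F (Fmap F p)" using card_subset_eq[OF fin] by blast
  then obtain t where "proj_pt v = proj_pt (line_point p w t)"
    using proj_pt_in_preimages[OF v] by (auto simp: \<phi>_def)
  then show ?thesis using in_line_if_proj_pt_eq line_point_in_line[OF pL w] by blast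
qed

theorem mainTheorem5:
  fixes F :: ratmap and d lam :: nat and p a a' :: vec3
  assumes "ratmap_deg F d" and "dominant F" and "topdeg F lam"
    and "d = lam" and "2 \<le> d"
    and "p \<noteq> 0" and "p \<notin> indet F"
    and "regular_value F (Fmap F p)"
    and "finite (preimages F (Fmap F p))" and "card (preimages F (Fmap F p)) = lam"
    and "Fmap F p \<notin> indet_image F"
    and "a \<noteq> 0" and "a' \<noteq> 0"
    and "p \<in> line a" and "p \<in> line a'"
    and "line a \<inter> indet F = {}" and "line a' \<inter> indet F = {}"
    and "image_set F (line a) \<noteq> image_set F (line a')"
  shows "\<not> is_line (image_set F (line a)) \<or> \<not> is_line (image_set F (line a'))"
proof (rule ccontr)
  assume "\<not> ?thesis"
  then obtain b b' where b: "image_set F (line a) = line b" "b \<noteq> 0"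
    and b': "image_set F (line a') = line b'" "b' \<noteq> 0" unfolding is_line_def by blast
  have on_both_lines: "v \<in> line a \<and> v \<in> line a'"
    if "v \<noteq> 0" "v \<notin> indet F" "Fmap F v \<in> proj_pt (Fmap F p)" for v
    using preimages_on_line[OF assms(1) _ assms(12,14) b assms(16,8,9)]
      preimages_on_line[OF assms(1) _ assms(13,15) b' assms(17,8,9)] that assms(4,5,10) by auto
  have "\<not> preimages F (Fmap F p) \<subseteq> {proj_pt p}"
  proof
    assume "preimages F (Fmap F p) \<subseteq> {proj_pt p}"
    then have "card (preimages F (Fmap F p)) \<le> 1" using card_mono[of "{proj_pt p}"] by simp
    with assms(4,5,10) show False by simp
  qed
  then obtain v where v: "v \<noteq> 0" "v \<notin> indet F" "Fmap F v \<in> proj_pt (Fmap F p)"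
    and "proj_pt v \<noteq> proj_pt p" unfolding preimages_def by blast
  then have "cross3 v p \<noteq> 0" using proj_pt_eq_if_cross3_eq_0 assms(6) by blast
  then have "line a = line a'"
    using line_eq_if_two_points on_both_lines[OF v] assms(12-15) by blast
  with assms(18) show False by simp
qed

end
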